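(* Let $p$ be an odd prime and $\alpha$ an integer with $1\le\alpha<p$. Let $a,b,c$ be non-zero integers with $\gcd(a,b,c)=1$ satisfying $a^p+2^\alpha b^p+c^p=0$ and normalized so that $a\equiv -1 \pmod 4$. Put $A=a^p$, $B=2^\alpha b^p$, and let $E$ be the elliptic curve over $\mathbb{Q}$ given by $y^2=x(x-A)(x+B)$. If $(a,b,c)\neq(-1,1,-1)$, then $E$ has multiplicative reduction at some prime $q\neq 2$. *)

theory Defs
  imports Complex_Main "HOL-Number_Theory.Cong"
begin

text \<open>Weierstrass models y^2 + a1 xy + a3 y = x^3 + a2 x^2 + a4 x + a6 over the rationals,
  with the standard invariants (Silverman, III.1).\<close>

record wmodel =
  wa1 :: rat
  wa2 :: rat
  wa3 :: rat
  wa4 :: rat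
  wa6 :: rat

definition wb2 :: "wmodel \<Rightarrow> rat" where "wb2 W = wa1 W ^ 2 + 4 * wa2 W"
definition wb4 :: "wmodel \<Rightarrow> rat" where "wb4 W = 2 * wa4 W + wa1 W * wa3 W"
definition wb6 :: "wmodel \<Rightarrow> rat" where "wb6 W = wa3 W ^ 2 + 4 * wa6 W"
definition wb8 :: "wmodel \<Rightarrow> rat" where
  "wb8 W = wa1 W ^ 2 * wa6 W + 4 * wa2 W * wa6 W - wa1 W * wa3 W * wa4 W
           + wa2 W * wa3 W ^ 2 - wa4 W ^ 2"
definition wc4 :: "wmodel \<Rightarrow> rat" where "wc4 W = wb2 W ^ 2 - 24 * wb4 W"
definition wdisc :: "wmodel \<Rightarrow> rat" where
  "wdisc W = - (wb2 W ^ 2) * wb8 W - 8 * wb4 W ^ 3 - 27 * wb6 W ^ 2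
             + 9 * wb2 W * wb4 W * wb6 W"

text \<open>Admissible change of variables x = u^2 x' + r, y = u^3 y' + s u^2 x' + t (u \<noteq> 0).\<close>
definition wchange :: "wmodel \<Rightarrow> rat \<Rightarrow> rat \<Rightarrow> rat \<Rightarrow> rat \<Rightarrow> wmodel" where
  "wchange W u r s t =
     \<lparr> wa1 = (wa1 W + 2 * s) / u,
       wa2 = (wa2 W - s * wa1 W + 3 * r - s ^ 2) / u ^ 2,
       wa3 = (wa3 W + r * wa1 W + 2 * t) / u ^ 3,
       wa4 = (wa4 W - s * wa3 W + 2 * r * wa2 W - (t + r * s) * wa1 W + 3 * r ^ 2 - 2 * s * t) / u ^ 4,
       wa6 = (wa6 W + r * wa4 W + r ^ 2 * wa2 W + r ^ 3 - t * wa3 W - t ^ 2 - r * t * wa1 W) / u ^ 6 \<rparr>"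

definition qint :: "nat \<Rightarrow> rat \<Rightarrow> bool" where
  "qint q x \<longleftrightarrow> (\<exists>n d :: int. d \<noteq> 0 \<and> \<not> int q dvd d \<and> x = of_int n / of_int d)"

definition qint_model :: "nat \<Rightarrow> wmodel \<Rightarrow> bool" where
  "qint_model q W \<longleftrightarrow> qint q (wa1 W) \<and> qint q (wa2 W) \<and> qint q (wa3 W)
                     \<and> qint q (wa4 W) \<and> qint q (wa6 W)"

text \<open>Minimal at q: q-integral, and v_q of the discriminant is minimal among all
  q-integral models obtained by admissible changes of variables
  (v_q(\<Delta>) \<le> v_q(\<Delta>') expressed as: \<Delta>'/\<Delta> is q-integral).\<close>
definition minimal_at :: "nat \<Rightarrow> wmodel \<Rightarrow> bool" where
  "minimal_at q W \<longleftrightarrow> qint_model q W \<and>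
     (\<forall>u r s t. u \<noteq> 0 \<longrightarrow> qint_model q (wchange W u r s t) \<longrightarrow>
        qint q (wdisc (wchange W u r s t) / wdisc W))"

text \<open>The elliptic curve given by W (nonsingular: \<Delta> \<noteq> 0) has multiplicative reduction at q:
  a minimal model at q has q | \<Delta> and q \<nmid> c4 (reduction has a node).\<close>
definition multiplicative_reduction :: "nat \<Rightarrow> wmodel \<Rightarrow> bool" where
  "multiplicative_reduction q W \<longleftrightarrow> wdisc W \<noteq> 0 \<and>
     (\<exists>u r s t. u \<noteq> 0 \<and> minimal_at q (wchange W u r s t) \<and>
        qint q (wdisc (wchange W u r s t) / of_nat q) \<and>
        \<not> qint q (wc4 (wchange W u r s t) / of_nat q))"

text \<open>The curve y^2 = x(x - A)(x + B) = x^3 + (B - A) x^2 - A B x.\<close>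
definition frey_model :: "int \<Rightarrow> int \<Rightarrow> wmodel" where
  "frey_model A B = \<lparr> wa1 = 0, wa2 = of_int (B - A), wa3 = 0, wa4 = of_int (- A * B), wa6 = 0 \<rparr>"

end

theory Submission
  imports Defs
begin

(* Take an odd prime q dividing ac; it exists because |a| = |c| = 1 forces the excluded
  solution. Put C = c^p, so A + B + C = 0. The Frey model has c4 = 16 (A^2 + AB + B^2) and
  discriminant 16 A^2 B^2 C^2. As q divides exactly one of A, B, C and
  A^2 + AB + B^2 = B^2 - AC = A^2 - BC, q divides the discriminant but not c4.
  A change of variables divides c4 by u^4 and the discriminant by u^12; so when c4 is a q-unit,
  any q-integral model obtained from it has 1/u q-integral and a discriminant of valuation at
  least the original one. The integral model is therefore minimal at q, with a node there. *)

section \<open>Changes of variables\<close>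

lemma wb2_wchange: "u \<noteq> 0 \<Longrightarrow> wb2 (wchange W u r s t) = (wb2 W + 12 * r) / u ^ 2"
  by (simp add: wb2_def wchange_def field_simps) algebra

lemma wb4_wchange: "u \<noteq> 0 \<Longrightarrow> wb4 (wchange W u r s t) = (wb4 W + r * wb2 W + 6 * r ^ 2) / u ^ 4"
  by (simp add: wb2_def wb4_def wchange_def field_simps) algebra

lemma wb6_wchange:
  "u \<noteq> 0 \<Longrightarrow> wb6 (wchange W u r s t) = (wb6 W + 2 * r * wb4 W + r ^ 2 * wb2 W + 4 * r ^ 3) / u ^ 6"
  by (simp add: wb2_def wb4_def wb6_def wchange_def field_simps) algebra

lemma wc4_wchange: "u \<noteq> 0 \<Longrightarrow> wc4 (wchange W u r s t) = wc4 W / u ^ 4"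
  by (simp add: wc4_def wb2_wchange wb4_wchange field_simps) algebra

lemma wb8_eq: "wb8 W = (wb2 W * wb6 W - wb4 W ^ 2) / 4"
  by (simp add: wb2_def wb4_def wb6_def wb8_def field_simps power2_eq_square)

lemma wdisc_wchange: "u \<noteq> 0 \<Longrightarrow> wdisc (wchange W u r s t) = wdisc W / u ^ 12"
  by (simp add: wdisc_def wb8_eq wb2_wchange wb4_wchange wb6_wchange field_simps) algebra

lemma wchange_id: "wchange W 1 0 0 0 = W"
  by (simp add: wchange_def)

section \<open>q-integral rationals\<close>

lemma qint_of_int [simp]: "prime q \<Longrightarrow> qint q (of_int n)"
  unfolding qint_def by (intro exI[of _ n] exI[of _ 1]) auto

lemma qint_numeral [simp]: "prime q \<Longrightarrow> qint q (numeral k)"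
  using qint_of_int[of q "numeral k"] by simp

lemma qint_0 [simp]: "prime q \<Longrightarrow> qint q 0"
  using qint_of_int[of q 0] by simp

lemma qint_1 [simp]: "prime q \<Longrightarrow> qint q 1"
  using qint_of_int[of q 1] by simp

lemma qint_cases:
  assumes "qint q x"
  obtains n d where "d \<noteq> 0" "\<not> int q dvd d" "x = of_int n / of_int d"
  using assms unfolding qint_def by blast

lemma qint_add:
  assumes q: "prime q" and "qint q x" "qint q y"
  shows "qint q (x + y)"
proof -
  obtain n1 d1 where 1: "d1 \<noteq> 0" "\<not> int q dvd d1" "x = of_int n1 / of_int d1"
    using \<open>qint q x\<close> by (rule qint_cases)
  obtain n2 d2 where 2: "d2 \<noteq> 0" "\<not> int q dvd d2" "y = of_int n2 / of_int d2"
    using \<open>qint q y\<close> by (rule qint_cases)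
  have "x + y = of_int (n1 * d2 + n2 * d1) / of_int (d1 * d2)"
    using 1 2 by (simp add: field_simps)
  moreover have "\<not> int q dvd d1 * d2"
    using 1 2 q by (simp add: prime_dvd_mult_iff)
  ultimately show ?thesis
    unfolding qint_def using 1 2 by (metis mult_eq_0_iff)
qed

lemma qint_mult:
  assumes q: "prime q" and "qint q x" "qint q y"
  shows "qint q (x * y)"
proof -
  obtain n1 d1 where 1: "d1 \<noteq> 0" "\<not> int q dvd d1" "x = of_int n1 / of_int d1"
    using \<open>qint q x\<close> by (rule qint_cases)
  obtain n2 d2 where 2: "d2 \<noteq> 0" "\<not> int q dvd d2" "y = of_int n2 / of_int d2"
    using \<open>qint q y\<close> by (rule qint_cases)
  have "x * y = of_int (n1 * n2) / of_int (d1 * d2)"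
    using 1 2 by simp
  moreover have "\<not> int q dvd d1 * d2"
    using 1 2 q by (simp add: prime_dvd_mult_iff)
  ultimately show ?thesis
    unfolding qint_def using 1 2 by (metis mult_eq_0_iff)
qed

lemma qint_minus:
  assumes "qint q x"
  shows "qint q (- x)"
proof -
  obtain n d where "d \<noteq> 0" "\<not> int q dvd d" "x = of_int n / of_int d"
    using assms by (rule qint_cases)
  then show ?thesis
    unfolding qint_def by (intro exI[of _ "- n"] exI[of _ d]) simp
qed

lemma qint_diff: "prime q \<Longrightarrow> qint q x \<Longrightarrow> qint q y \<Longrightarrow> qint q (x - y)"
  using qint_add[of q x "- y"] qint_minus[of q y] by simp

lemma qint_power: "prime q \<Longrightarrow> qint q x \<Longrightarrow> qint q (x ^ n)"
  by (induction n) (auto intro: qint_mult)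

lemma qint_div_prime_iff:
  assumes q: "prime q"
  shows "qint q (of_int N / of_nat q) \<longleftrightarrow> int q dvd N"
proof
  assume "qint q (of_int N / of_nat q)"
  then obtain m e where me: "e \<noteq> 0" "\<not> int q dvd e" "of_int N / of_nat q = of_int m / (of_int e :: rat)"
    by (rule qint_cases)
  have "of_int (N * e) = (of_int (m * int q) :: rat)"
    using me q by (simp add: prime_gt_0_nat field_simps)
  then have "int q dvd N * e"
    by (simp only: of_int_eq_iff) simp
  with q me(2) show "int q dvd N"
    by (simp add: prime_dvd_mult_iff)
next
  assume "int q dvd N"
  then obtain k where "N = int q * k" ..
  then have "of_int N / of_nat q = (of_int k :: rat)"
    using q by (simp add: prime_gt_0_nat)
  then show "qint q (of_int N / of_nat q)"
    using q by simp
qed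

lemma qint_inverse_if_unit_div_power:
  assumes q: "prime q" and k: "k > 0" and c: "\<not> int q dvd c"
    and h: "qint q (of_int c / u ^ k)"
  shows "qint q (inverse u)"
proof (cases "u = 0")
  case True
  then show ?thesis using q by simp
next
  case False
  obtain n d where nd: "quotient_of u = (n, d)"
    by (cases "quotient_of u") auto
  have u: "u = of_int n / of_int d" and "d > 0"
    using quotient_of_div[OF nd] quotient_of_denom_pos[OF nd] by auto
  with False have "n \<noteq> 0" by auto
  obtain m e where me: "e \<noteq> 0" "\<not> int q dvd e" "of_int c / u ^ k = of_int m / (of_int e :: rat)"
    using h by (rule qint_cases)
  have "of_int (c * d ^ k * e) = (of_int (m * n ^ k) :: rat)"
    using me u \<open>n \<noteq> 0\<close> \<open>d > 0\<close> by (simp add: field_simps)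
  then have eq: "c * d ^ k * e = m * n ^ k"
    by (simp only: of_int_eq_iff)
  have "\<not> int q dvd n"
  proof
    assume qn: "int q dvd n"
    then have "int q dvd c * d ^ k * e"
      unfolding eq using k by (meson dvd_mult dvd_power dvd_trans)
    then have "int q dvd d"
      using q c me(2) by (simp add: prime_dvd_mult_iff prime_dvd_power)
    with qn quotient_of_coprime[OF nd] q show False
      by (meson coprime_common_divisor not_prime_unit prime_nat_int_transfer)
  qed
  moreover have "inverse u = of_int d / of_int n"
    using u by simp
  ultimately show ?thesis
    unfolding qint_def using \<open>n \<noteq> 0\<close> by blast
qed

lemma qint_wc4: "prime q \<Longrightarrow> qint_model q W \<Longrightarrow> qint q (wc4 W)"
  unfolding qint_model_def wc4_def wb2_def wb4_def
  by (intro qint_diff qint_add qint_mult qint_power qint_numeral) simp_all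

section \<open>Models whose c4 is a q-unit\<close>

lemma minimal_at_if_wc4_unit:
  assumes q: "prime q" and W: "qint_model q W" and "wdisc W \<noteq> 0"
    and c4: "wc4 W = of_int C" and "\<not> int q dvd C"
  shows "minimal_at q W"
  unfolding minimal_at_def
proof (intro conjI W allI impI)
  fix u r s t :: rat
  assume u: "u \<noteq> 0" and "qint_model q (wchange W u r s t)"
  then have "qint q (wc4 (wchange W u r s t))"
    using qint_wc4[OF q] by blast
  then have "qint q (of_int C / u ^ 4)"
    using u by (simp add: wc4_wchange c4)
  then have "qint q (inverse u ^ 12)"
    using q \<open>\<not> int q dvd C\<close> by (intro qint_power qint_inverse_if_unit_div_power[of q 4]) auto
  moreover have "wdisc (wchange W u r s t) / wdisc W = inverse u ^ 12"
    using u \<open>wdisc W \<noteq> 0\<close> by (simp add: wdisc_wchange field_simps)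
  ultimately show "qint q (wdisc (wchange W u r s t) / wdisc W)"
    by simp
qed

lemma multiplicative_reduction_if_wc4_unit:
  assumes q: "prime q" and W: "qint_model q W"
    and disc: "wdisc W = of_int D" "D \<noteq> 0" "int q dvd D"
    and c4: "wc4 W = of_int C" "\<not> int q dvd C"
  shows "multiplicative_reduction q W"
proof -
  have "minimal_at q W"
    using minimal_at_if_wc4_unit[OF q W] disc c4 by simp
  then show ?thesis
    unfolding multiplicative_reduction_def using disc c4 q
    by (intro conjI exI[of _ 1] exI[of _ 0]) (simp_all add: wchange_id qint_div_prime_iff)
qed

section \<open>The Frey curve\<close>

lemma odd_prime_not_dvd_two_power:
  assumes "prime q" and "q \<noteq> 2"
  shows "\<not> int q dvd 2 ^ n"
proof
  assume "int q dvd 2 ^ n"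
  then have "int q dvd 2"
    using \<open>prime q\<close> prime_dvd_power[of "int q"] by simp
  then have "q dvd 2"
    by (metis int_dvd_int_iff of_nat_numeral)
  with assms show False
    using primes_dvd_imp_eq two_is_prime_nat by blast
qed

lemma wdisc_frey_model: "wdisc (frey_model A B) = of_int (16 * A\<^sup>2 * B\<^sup>2 * (A + B)\<^sup>2)"
  by (simp add: wdisc_def wb2_def wb4_def wb6_def wb8_def frey_model_def)
     (simp add: algebra_simps power2_eq_square power3_eq_cube)

lemma wc4_frey_model: "wc4 (frey_model A B) = of_int (16 * (A\<^sup>2 + A * B + B\<^sup>2))"
  by (simp add: wc4_def wb2_def wb4_def frey_model_def) (simp add: algebra_simps power2_eq_square)

lemma qint_model_frey_model: "prime q \<Longrightarrow> qint_model q (frey_model A B)"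
  unfolding qint_model_def frey_model_def
  using qint_of_int[of q "B - A"] qint_of_int[of q "- A * B"] by simp

lemma prime_dvd_form_left_imp_right:
  fixes A B Q :: int
  assumes Q: "prime Q" and "Q dvd A" and "Q dvd A\<^sup>2 + A * B + B\<^sup>2"
  shows "Q dvd B"
proof -
  have "Q dvd (A\<^sup>2 + A * B + B\<^sup>2) - A * (A + B)"
    using assms(2,3) by simp
  then have "Q dvd B\<^sup>2"
    by (simp add: algebra_simps power2_eq_square)
  then show ?thesis
    using Q prime_dvd_power by blast
qed

lemma prime_not_dvd_form:
  fixes A B :: int
  assumes Q: "prime Q" and "Q dvd A * B * (A + B)" and coprime: "\<not> (Q dvd A \<and> Q dvd B)"
  shows "\<not> Q dvd A\<^sup>2 + A * B + B\<^sup>2"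
proof
  assume form: "Q dvd A\<^sup>2 + A * B + B\<^sup>2"
  have "A\<^sup>2 + A * B + B\<^sup>2 = B\<^sup>2 + B * A + A\<^sup>2"
    by algebra
  with form have form_BA: "Q dvd B\<^sup>2 + B * A + A\<^sup>2"
    by simp
  have "A\<^sup>2 + A * B + B\<^sup>2 = (- (A + B))\<^sup>2 + (- (A + B)) * A + A\<^sup>2"
    by algebra
  with form have form_CA: "Q dvd (- (A + B))\<^sup>2 + (- (A + B)) * A + A\<^sup>2"
    by simp
  from \<open>Q dvd A * B * (A + B)\<close> Q consider "Q dvd A" | "Q dvd B" | "Q dvd - (A + B)"
    by (auto simp only: prime_dvd_mult_iff dvd_minus_iff)
  then show False
  proof cases
    case 1
    then show False
      using prime_dvd_form_left_imp_right[OF Q 1 form] coprime by blast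
  next
    case 2
    then show False
      using prime_dvd_form_left_imp_right[OF Q 2 form_BA] coprime by blast
  next
    case 3
    then have "Q dvd A"
      using prime_dvd_form_left_imp_right[OF Q 3 form_CA] by blast
    moreover from 3 this have "Q dvd B"
      by (metis add_diff_cancel_left' dvd_diff dvd_minus_iff)
    ultimately show False
      using coprime by blast
  qed
qed

lemma frey_model_multiplicative_reduction:
  fixes A B :: int
  assumes q: "prime q" "q \<noteq> 2" and "A * B * (A + B) \<noteq> 0"
    and "int q dvd A * B * (A + B)" and "\<not> (int q dvd A \<and> int q dvd B)"
  shows "multiplicative_reduction q (frey_model A B)"
proof (rule multiplicative_reduction_if_wc4_unit[OF q(1) qint_model_frey_model[OF q(1)]])
  have Q: "prime (int q)"
    using q by simp
  have "\<not> int q dvd 16"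
    using odd_prime_not_dvd_two_power[OF q, of 4] by simp
  show "wdisc (frey_model A B) = of_int (16 * A\<^sup>2 * B\<^sup>2 * (A + B)\<^sup>2)"
    by (rule wdisc_frey_model)
  show "16 * A\<^sup>2 * B\<^sup>2 * (A + B)\<^sup>2 \<noteq> 0"
    using assms(3) by simp
  show "int q dvd 16 * A\<^sup>2 * B\<^sup>2 * (A + B)\<^sup>2"
    using assms(4) by (simp add: power2_eq_square) (metis dvd_mult mult.assoc mult.left_commute)
  show "wc4 (frey_model A B) = of_int (16 * (A\<^sup>2 + A * B + B\<^sup>2))"
    by (rule wc4_frey_model)
  show "\<not> int q dvd 16 * (A\<^sup>2 + A * B + B\<^sup>2)"
    using prime_not_dvd_form[OF Q assms(4,5)] \<open>\<not> int q dvd 16\<close> prime_dvd_mult_iff[OF Q]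
    by blast
qed

section \<open>The equation a^p + 2^\<alpha> b^p + c^p = 0\<close>

lemma odd_prime_factor_int:
  fixes x :: int
  assumes "odd x" and "\<bar>x\<bar> \<noteq> 1"
  obtains q :: nat where "prime q" "q \<noteq> 2" "int q dvd x"
proof -
  obtain r where r: "prime r" "r dvd x"
    using prime_factor_int[OF assms(2)] by blast
  with \<open>odd x\<close> have "r \<noteq> 2" by auto
  with r show ?thesis
    using that[of "nat r"] prime_ge_0_int[of r] by simp
qed

lemma unit_solution_eq:
  fixes a b c :: int
  assumes "odd p" and "1 \<le> \<alpha>" and "b \<noteq> 0"
    and eq: "a ^ p + 2 ^ \<alpha> * b ^ p + c ^ p = 0"
    and "a = -1" and "\<bar>c\<bar> = 1"
  shows "b = 1 \<and> c = -1"
proof -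
  have c: "c = 1 \<or> c = -1"
    using \<open>\<bar>c\<bar> = 1\<close> by auto
  then have "c ^ p = c" and "a ^ p = -1"
    using \<open>odd p\<close> \<open>a = -1\<close> by auto
  with eq c \<open>b \<noteq> 0\<close> have "c = -1" and bp: "2 ^ \<alpha> * b ^ p = 2"
    by auto
  obtain k where "\<alpha> = Suc k"
    using \<open>1 \<le> \<alpha>\<close> by (cases \<alpha>) auto
  with bp have "2 ^ k * b ^ p = 1"
    by simp
  then have "is_unit (b ^ p)"
    by (metis dvd_triv_right)
  then have "is_unit b"
    using odd_pos[OF \<open>odd p\<close>] by (meson dvd_power dvd_trans)
  then have "b = 1 \<or> b = -1"
    by auto
  with \<open>odd p\<close> have "2 ^ \<alpha> * b = 2"
    using bp by auto
  then have "b > 0"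
    using zero_less_mult_pos[of "2 ^ \<alpha>" b] by simp
  with \<open>b = 1 \<or> b = -1\<close> have "b = 1"
    by auto
  with \<open>c = -1\<close> show ?thesis
    by blast
qed

lemma exists_odd_prime_dvd_mult:
  fixes a b c :: int
  assumes "odd p" and "1 \<le> \<alpha>" and "b \<noteq> 0"
    and eq: "a ^ p + 2 ^ \<alpha> * b ^ p + c ^ p = 0"
    and "[a = -1] (mod 4)"
    and "(a, b, c) \<noteq> (-1, 1, -1)"
  obtains q :: nat where "prime q" "q \<noteq> 2" "int q dvd a * c"
proof (rule odd_prime_factor_int)
  have "a mod 4 = 3"
    using \<open>[a = -1] (mod 4)\<close> by (simp add: cong_def)
  then have "odd a"
    using mod_mod_cancel[of 2 4 a] by (simp add: odd_iff_mod_2_eq_one)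
  have "c ^ p = - (a ^ p) - 2 ^ \<alpha> * b ^ p"
    using eq by simp
  then have "odd (c ^ p)"
    using \<open>odd a\<close> \<open>1 \<le> \<alpha>\<close> by simp
  then have "odd c"
    using odd_pos[OF \<open>odd p\<close>] by simp
  with \<open>odd a\<close> show "odd (a * c)"
    by simp
  show "\<bar>a * c\<bar> \<noteq> 1"
  proof
    assume "\<bar>a * c\<bar> = 1"
    then have "\<bar>a\<bar> = 1" and "\<bar>c\<bar> = 1"
      by (simp_all add: is_unit_mult_iff flip: zdvd1_eq)
    with \<open>a mod 4 = 3\<close> have "a = -1"
      by (cases "a \<ge> 0") auto
    with unit_solution_eq[OF assms(1-4) _ \<open>\<bar>c\<bar> = 1\<close>] assms(6) show False
      by simp
  qed
qed

lemma prime_not_dvd_both_terms: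
  fixes a b c :: int
  assumes q: "prime q" "q \<noteq> 2" and "p > 0"
    and gcd: "gcd (gcd a b) c = 1"
    and eq: "a ^ p + 2 ^ \<alpha> * b ^ p + c ^ p = 0"
  shows "\<not> (int q dvd a ^ p \<and> int q dvd 2 ^ \<alpha> * b ^ p)"
proof
  assume dvd: "int q dvd a ^ p \<and> int q dvd 2 ^ \<alpha> * b ^ p"
  have Q: "prime (int q)"
    using q by simp
  have "\<not> int q dvd 2 ^ \<alpha>"
    using odd_prime_not_dvd_two_power[OF q] .
  have "c ^ p = - (a ^ p + 2 ^ \<alpha> * b ^ p)"
    using eq by simp
  then have "int q dvd c ^ p"
    using dvd by simp
  with dvd \<open>\<not> int q dvd 2 ^ \<alpha>\<close> have "int q dvd a" "int q dvd b" "int q dvd c"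
    using prime_dvd_power_iff[OF Q \<open>p > 0\<close>] prime_dvd_mult_iff[OF Q] by auto
  then have "int q dvd 1"
    using gcd by (metis gcd_greatest)
  with Q show False
    using not_prime_unit by blast
qed

theorem mainTheorem4:
  fixes p \<alpha> :: nat and a b c :: int
  assumes "prime p" and "odd p"
    and "1 \<le> \<alpha>" and "\<alpha> < p"
    and "a \<noteq> 0" and "b \<noteq> 0" and "c \<noteq> 0"
    and "gcd (gcd a b) c = 1"
    and "a ^ p + 2 ^ \<alpha> * b ^ p + c ^ p = 0"
    and "[a = -1] (mod 4)"
    and "(a, b, c) \<noteq> (-1, 1, -1)"
  shows "\<exists>q::nat. prime q \<and> q \<noteq> 2 \<and>
           multiplicative_reduction q (frey_model (a ^ p) (2 ^ \<alpha> * b ^ p))"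
proof -
  obtain q where q: "prime q" "q \<noteq> 2" "int q dvd a * c"
    using exists_odd_prime_dvd_mult[OF assms(2,3,6,9,10,11)] .
  have p: "p > 0"
    using \<open>odd p\<close> by (rule odd_pos)
  define A B where "A = a ^ p" and "B = (2 :: int) ^ \<alpha> * b ^ p"
  have sum: "A + B = - (c ^ p)"
    using assms(9) by (simp add: A_def B_def)
  have "A * B * (A + B) = - B * (a * c) ^ p"
    unfolding sum by (simp add: A_def power_mult_distrib algebra_simps)
  moreover have "int q dvd (a * c) ^ p"
    using q(3) p by (meson dvd_power dvd_trans)
  ultimately have "int q dvd A * B * (A + B)"
    by simp
  moreover have "A * B * (A + B) \<noteq> 0"
    using sum assms(5-7) by (simp add: A_def B_def)
  moreover have "\<not> (int q dvd A \<and> int q dvd B)"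
    unfolding A_def B_def using prime_not_dvd_both_terms[OF q(1,2) p assms(8,9)] .
  ultimately show ?thesis
    using frey_model_multiplicative_reduction[OF q(1,2)] q unfolding A_def B_def by blast
qed

end
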